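(* Let $X_\ell$ be one of the affine types listed in the context and let $p:\{0,1,\dots,k-1\}\to I$ be a type $X_\ell$ path of length $k$. If $k>1$, then there is a unique directed walk in $B^{1,1}$ corresponding to $p$ (i.e. a unique sequence of $k$ consecutive arrows whose $t$-th arrow has color $p(t)$ for each $t$).
   Context: $I=\{0,1,\dots,\ell\}$ indexes the Dynkin nodes of the affine type $X_\ell$, one of $A^{(1)}_\ell$ ($\ell\ge2$), $C^{(1)}_\ell$ ($\ell\ge2$), $A^{(2)}_{2\ell}$ ($\ell\ge2$), $A^{(2)\dagger}_{2\ell}$ ($\ell\ge2$), $D^{(2)}_{\ell+1}$ ($\ell\ge2$), $D^{(1)}_\ell$ ($\ell\ge4$), $B^{(1)}_\ell$ ($\ell\ge3$), $A^{(2)}_{2\ell-1}$ ($\ell\ge3$). The Kirillov–Reshetikhin crystal $B^{1,1}$ of type $X_\ell$ is the following $I$-colored directed graph: $A^{(1)}_\ell$: a directed cycle with $\ell+1$ nodes whose successive arrows have colors $1,2,\dots,\ell,0$; $C^{(1)}_\ell$: directed cycle with $2\ell$ nodes, colors $1,\dots,\ell,\ell-1,\dots,1,0$; $A^{(2)}_{2\ell}$: cycle with $2\ell+1$ nodes, colors $1,\dots,\ell,\ell-1,\dots,1,0,0$; $A^{(2)\dagger}_{2\ell}$: cycle with $2\ell+1$ nodes, colors $1,\dots,\ell,\ell,\ell-1,\dots,1,0$; $D^{(2)}_{\ell+1}$: cycle with $2\ell+2$ nodes, colors $1,\dots,\ell,\ell,\ell-1,\dots,1,0,0$; $B^{(1)}_\ell$: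 nodes $u_1,\dots,u_\ell,z,\bar u_\ell,\dots,\bar u_1$ with arrows $u_t\xrightarrow{t}u_{t+1}$, $\bar u_{t+1}\xrightarrow{t}\bar u_t$ ($1\le t\le\ell-1$), $u_\ell\xrightarrow{\ell}z\xrightarrow{\ell}\bar u_\ell$, $\bar u_1\xrightarrow{0}u_2$, $\bar u_2\xrightarrow{0}u_1$; $A^{(2)}_{2\ell-1}$: as for $B^{(1)}_\ell$ but without $z$, with a single arrow $u_\ell\xrightarrow{\ell}\bar u_\ell$; $D^{(1)}_\ell$: nodes $u_1,\dots,u_{\ell-1},v,v',\bar u_{\ell-1},\dots,\bar u_1$ with arrows $u_t\xrightarrow{t}u_{t+1}$, $\bar u_{t+1}\xrightarrow{t}\bar u_t$ ($1\le t\le\ell-2$), $u_{\ell-1}\xrightarrow{\ell-1}v\xrightarrow{\ell}\bar u_{\ell-1}$, $u_{\ell-1}\xrightarrow{\ell}v'\xrightarrow{\ell-1}\bar u_{\ell-1}$, $\bar u_1\xrightarrow{0}u_2$, $\bar u_2\xrightarrow{0}u_1$. A type $X_\ell$ path of length $k$ is a function $p:\{0,\dots,k-1\}\to I$ such that there is a directed walk in $B^{1,1}$ whose $t$-th step is a $p(t)$-colored arrow. *)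

theory Defs
  imports Main
begin

datatype aff_type = A1 | C1 | A2even | A2even_dag | D2 | D1 | B1 | A2odd

definition valid_type :: "aff_type \<Rightarrow> nat \<Rightarrow> bool" where
  "valid_type X l = (case X of
       A1 \<Rightarrow> l \<ge> 2 | C1 \<Rightarrow> l \<ge> 2 | A2even \<Rightarrow> l \<ge> 2 | A2even_dag \<Rightarrow> l \<ge> 2
     | D2 \<Rightarrow> l \<ge> 2 | D1 \<Rightarrow> l \<ge> 4 | B1 \<Rightarrow> l \<ge> 3 | A2odd \<Rightarrow> l \<ge> 3)"

text \<open>Nodes of B^{1,1}: Cyc i for the cycle types, U t = u_t, Z = z, Ub t = bar u_t, V = v, V' = v'.\<close>
datatype node = Cyc nat | U nat | Z | Ub nat | V | V'

text \<open>Colour sequences of the cyclic crystals (arrow i goes from node i to node i+1 mod length).\<close>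
definition cycle_colors :: "aff_type \<Rightarrow> nat \<Rightarrow> nat list" where
  "cycle_colors X l = (case X of
       A1 \<Rightarrow> [1..<l+1] @ [0]
     | C1 \<Rightarrow> [1..<l+1] @ rev [1..<l] @ [0]
     | A2even \<Rightarrow> [1..<l+1] @ rev [1..<l] @ [0, 0]
     | A2even_dag \<Rightarrow> [1..<l+1] @ rev [1..<l+1] @ [0]
     | D2 \<Rightarrow> [1..<l+1] @ rev [1..<l+1] @ [0, 0]
     | _ \<Rightarrow> [])"

definition cycle_arrows :: "nat list \<Rightarrow> (node \<times> nat \<times> node) set" where
  "cycle_arrows cs = {(Cyc i, cs ! i, Cyc ((i + 1) mod length cs)) | i. i < length cs}"

definition zero_arrows :: "(node \<times> nat \<times> node) set" where
  "zero_arrows = {(Ub 1, 0, U 2), (Ub 2, 0, U 1)}"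

text \<open>Arrows of the Kirillov-Reshetikhin crystal B^{1,1} as (source, colour, target).\<close>
definition arrows :: "aff_type \<Rightarrow> nat \<Rightarrow> (node \<times> nat \<times> node) set" where
  "arrows X l = (case X of
       B1 \<Rightarrow> {(U t, t, U (t+1)) | t. 1 \<le> t \<and> t \<le> l - 1}
            \<union> {(Ub (t+1), t, Ub t) | t. 1 \<le> t \<and> t \<le> l - 1}
            \<union> {(U l, l, Z), (Z, l, Ub l)} \<union> zero_arrows
     | A2odd \<Rightarrow> {(U t, t, U (t+1)) | t. 1 \<le> t \<and> t \<le> l - 1}
            \<union> {(Ub (t+1), t, Ub t) | t. 1 \<le> t \<and> t \<le> l - 1}
            \<union> {(U l, l, Ub l)} \<union> zero_arrows
     | D1 \<Rightarrow> {(U t, t, U (t+1)) | t. 1 \<le> t \<and> t \<le> l - 2}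
            \<union> {(Ub (t+1), t, Ub t) | t. 1 \<le> t \<and> t \<le> l - 2}
            \<union> {(U (l-1), l-1, V), (V, l, Ub (l-1)), (U (l-1), l, V'), (V', l-1, Ub (l-1))}
            \<union> zero_arrows
     | _ \<Rightarrow> cycle_arrows (cycle_colors X l))"

definition is_walk :: "aff_type \<Rightarrow> nat \<Rightarrow> nat \<Rightarrow> (nat \<Rightarrow> nat) \<Rightarrow> (node \<times> nat \<times> node) list \<Rightarrow> bool" where
  "is_walk X l k p ws \<longleftrightarrow> length ws = k
     \<and> (\<forall>t<k. ws ! t \<in> arrows X l \<and> fst (snd (ws ! t)) = p t)
     \<and> (\<forall>t. t + 1 < k \<longrightarrow> snd (snd (ws ! t)) = fst (ws ! (t + 1)))"

text \<open>Only the values p 0, ..., p (k-1) matter.\<close>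
definition is_path :: "aff_type \<Rightarrow> nat \<Rightarrow> nat \<Rightarrow> (nat \<Rightarrow> nat) \<Rightarrow> bool" where
  "is_path X l k p \<longleftrightarrow> (\<exists>ws. is_walk X l k p ws)"

end

theory Submission
  imports Defs
begin

text \<open>A walk of length at least two is determined by its colours as soon as every
  colour pair (c, d) labels at most one pair of consecutive arrows of B^{1,1}: each arrow of
  the walk then sits in such a pair.  For the cyclic crystals this means that the pairs of
  cyclically adjacent colours are all distinct; the remaining crystals are checked directly.\<close>

definition colour_pairs_determine :: "('v \<times> 'c \<times> 'v) set \<Rightarrow> bool" where
  "colour_pairs_determine A \<longleftrightarrow>
     (\<forall>x c y d z x' y' z'. (x, c, y) \<in> A \<longrightarrow> (y, d, z) \<in> A \<longrightarrow> (x', c, y') \<in> A \<longrightarrow> (y', d, z') \<in> A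
        \<longrightarrow> x = x' \<and> y = y' \<and> z = z')"

lemma is_walk_unique:
  assumes det: "colour_pairs_determine (arrows X l)" and "1 < k"
    and ws: "is_walk X l k p ws" and ws': "is_walk X l k p ws'"
  shows "ws = ws'"
proof -
  have consecutive: "ws ! s = ws' ! s \<and> ws ! (s + 1) = ws' ! (s + 1)" if "s + 1 < k" for s
  proof -
    obtain x y z where "ws ! s = (x, p s, y)" "ws ! (s + 1) = (y, p (s + 1), z)"
      "(x, p s, y) \<in> arrows X l" "(y, p (s + 1), z) \<in> arrows X l"
      using ws \<open>s + 1 < k\<close> unfolding is_walk_def by (metis add_lessD1 prod.collapse)
    moreover obtain x' y' z' where "ws' ! s = (x', p s, y')" "ws' ! (s + 1) = (y', p (s + 1), z')"
      "(x', p s, y') \<in> arrows X l" "(y', p (s + 1), z') \<in> arrows X l"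
      using ws' \<open>s + 1 < k\<close> unfolding is_walk_def by (metis add_lessD1 prod.collapse)
    ultimately show ?thesis
      using det[unfolded colour_pairs_determine_def, rule_format, of x "p s" y "p (s + 1)" z x' y' z']
      by simp
  qed
  show ?thesis
  proof (rule nth_equalityI)
    show "length ws = length ws'" using ws ws' unfolding is_walk_def by simp
    fix t assume "t < length ws"
    then have "t < k" using ws unfolding is_walk_def by simp
    show "ws ! t = ws' ! t"
    proof (cases "t + 1 < k")
      case True then show ?thesis using consecutive by blast
    next
      case False then show ?thesis using consecutive[of "t - 1"] \<open>1 < k\<close> \<open>t < k\<close> by simp
    qed
  qed
qed

text \<open>The colour sequences of the cyclic crystals are of this shape, with d \<in> {0, l - 1, l}
  and z \<in> {1, 2}; three trailing zeros would repeat the colour pair (0, 0).\<close>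

definition kr_cycle :: "nat \<Rightarrow> nat \<Rightarrow> nat \<Rightarrow> nat list" where
  "kr_cycle l d z = [1..<l+1] @ rev [1..<d+1] @ replicate z 0"

lemma length_kr_cycle: "length (kr_cycle l d z) = l + d + z"
  by (simp add: kr_cycle_def)

lemma nth_kr_cycle:
  "i < l + d + z \<Longrightarrow>
     kr_cycle l d z ! i = (if i < l then i + 1 else if i < l + d then l + d - i else 0)"
  by (auto simp: kr_cycle_def nth_append rev_nth simp del: upt_Suc)

lemma kr_cycle_colour_pairs_inj:
  assumes "1 \<le> l" "d \<le> l" "z \<in> {1, 2}"
  defines "cs \<equiv> kr_cycle l d z"
  shows "inj_on (\<lambda>i. (cs ! i, cs ! ((i + 1) mod length cs))) {..<length cs}"
proof (rule inj_onI)
  fix i j assume "i \<in> {..<length cs}" "j \<in> {..<length cs}"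
    and "(cs ! i, cs ! ((i + 1) mod length cs)) = (cs ! j, cs ! ((j + 1) mod length cs))"
  then show "i = j" using assms(1-3)
    by (auto simp: cs_def length_kr_cycle nth_kr_cycle mod_if split: if_split_asm)
qed

lemma colour_pairs_determine_cycle_arrows:
  assumes inj: "inj_on (\<lambda>i. (cs ! i, cs ! ((i + 1) mod length cs))) {..<length cs}"
  shows "colour_pairs_determine (cycle_arrows cs)"
  unfolding colour_pairs_determine_def
proof (intro allI impI)
  let ?next = "\<lambda>i. (i + 1) mod length cs"
  fix x c y d z x' y' z'
  assume "(x, c, y) \<in> cycle_arrows cs" "(y, d, z) \<in> cycle_arrows cs"
    "(x', c, y') \<in> cycle_arrows cs" "(y', d, z') \<in> cycle_arrows cs"
  then obtain i i' where "i < length cs" "i' < length cs"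
    and arrows: "x = Cyc i" "y = Cyc (?next i)" "z = Cyc (?next (?next i))"
      "x' = Cyc i'" "y' = Cyc (?next i')" "z' = Cyc (?next (?next i'))"
    and "c = cs ! i" "c = cs ! i'" "d = cs ! ?next i" "d = cs ! ?next i'"
    unfolding cycle_arrows_def by auto
  then have "i = i'" using inj by (auto dest: inj_onD)
  then show "x = x' \<and> y = y' \<and> z = z'" using arrows by simp
qed

lemma cycle_colors_eq_kr_cycle:
  assumes "X \<in> {A1, C1, A2even, A2even_dag, D2}" "1 \<le> l"
  obtains d z where "d \<le> l" "z \<in> {1, 2}" "cycle_colors X l = kr_cycle l d z"
proof -
  have "[1..<l] = [1..<(l - 1) + 1]" using \<open>1 \<le> l\<close> by simp
  then show thesis using assms that[of 0 1] that[of "l - 1" 1] that[of "l - 1" 2] that[of l 1] that[of l 2]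
    by (auto simp: cycle_colors_def kr_cycle_def numeral_2_eq_2)
qed

lemma colour_pairs_determine_B1: "colour_pairs_determine (arrows B1 l)"
  unfolding colour_pairs_determine_def arrows_def zero_arrows_def by auto

lemma colour_pairs_determine_A2odd: "colour_pairs_determine (arrows A2odd l)"
  unfolding colour_pairs_determine_def arrows_def zero_arrows_def by auto

lemma colour_pairs_determine_D1: "1 \<le> l \<Longrightarrow> colour_pairs_determine (arrows D1 l)"
  unfolding colour_pairs_determine_def arrows_def zero_arrows_def by auto

lemma colour_pairs_determine_arrows:
  assumes "valid_type X l"
  shows "colour_pairs_determine (arrows X l)"
proof (cases "X \<in> {A1, C1, A2even, A2even_dag, D2}")
  case True
  moreover have "1 \<le> l" using assms by (cases X) (auto simp: valid_type_def)
  ultimately obtain d z where "d \<le> l" "z \<in> {1, 2}" "cycle_colors X l = kr_cycle l d z"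
    by (rule cycle_colors_eq_kr_cycle)
  moreover have "arrows X l = cycle_arrows (cycle_colors X l)"
    using True by (auto simp: arrows_def)
  ultimately show ?thesis
    using \<open>1 \<le> l\<close> kr_cycle_colour_pairs_inj colour_pairs_determine_cycle_arrows by metis
next
  case False
  then show ?thesis using assms
    by (cases X) (auto simp: valid_type_def colour_pairs_determine_B1 colour_pairs_determine_A2odd
        colour_pairs_determine_D1)
qed

theorem mainTheorem4:
  fixes X :: aff_type and l k :: nat and p :: "nat \<Rightarrow> nat"
  assumes "valid_type X l" and "is_path X l k p" and "k > 1"
  shows "\<exists>!ws. is_walk X l k p ws"
proof -
  obtain ws where "is_walk X l k p ws" using assms(2) unfolding is_path_def by blast
  moreover have "colour_pairs_determine (arrows X l)"
    using assms(1) by (rule colour_pairs_determine_arrows)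
  ultimately show ?thesis using is_walk_unique assms(3) by blast
qed

end
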